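(* Let $B(z)=\prod_{i=1}^n\frac{z-a_i}{1-\overline{a_i}z}$ be a finite Blaschke product with $a_1,\ldots,a_n$ in the open unit disc and $a_1=0$. Then \[H^\infty=e_{00}H^\infty(B)\oplus e_{10}H^\infty(B)\oplus\cdots\oplus e_{n-1,0}H^\infty(B),\] i.e. every $f\in H^\infty$ can be written as $f=\sum_{j=0}^{n-1}e_{j0}f_j$ with $f_j\in H^\infty(B)$, the sum being direct.
   Context: $H^p$ denote the classical Hardy spaces on the unit circle. $H^\infty(B)=\{f\circ B: f\in H^\infty\}$. For $0\le j\le n-1$, $B_j(z)=\prod_{i=1}^{j}\frac{z-a_i}{1-\overline{a_i}z}$ (with $B_0=1$) and $e_{j0}(z)=\frac{\sqrt{1-|a_{j+1}|^2}}{1-\overline{a_{j+1}}z}B_j(z)$. *)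

theory Defs
  imports "HOL-Analysis.Analysis"
begin

text \<open>Functions on the open unit disc are represented as total functions
  complex => complex; only their values on ball 0 1 matter.\<close>

definition Hinf :: "(complex \<Rightarrow> complex) set" where
  "Hinf = {f. f holomorphic_on ball 0 1 \<and> bounded (f ` ball 0 1)}"

definition Hinf_comp :: "(complex \<Rightarrow> complex) \<Rightarrow> (complex \<Rightarrow> complex) set" where
  "Hinf_comp B = {g. \<exists>f\<in>Hinf. \<forall>z\<in>ball 0 1. g z = f (B z)}"

definition blaschke_partial :: "(nat \<Rightarrow> complex) \<Rightarrow> nat \<Rightarrow> complex \<Rightarrow> complex" where
  "blaschke_partial a j z = (\<Prod>i=1..j. (z - a i) / (1 - cnj (a i) * z))"

definition e0 :: "(nat \<Rightarrow> complex) \<Rightarrow> nat \<Rightarrow> complex \<Rightarrow> complex" where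
  "e0 a j z = complex_of_real (sqrt (1 - (cmod (a (Suc j)))\<^sup>2)) / (1 - cnj (a (Suc j)) * z)
              * blaschke_partial a j z"

end

(* Write B for the Blaschke product, e_j for e0 a j and e~_j for the rational function
   e0_dual a n j. The kernel identity
     B z - B u = (z - u) * (SUM j<n. e_j z * e~_j u)
   turns Cauchy's formula for f on a circle
   enclosing the fibre of B z into f z = SUM j<n. e_j z * h_j (B z), where h_j w is the
   sum of the residues of f * e~_j / (B - w) over the fibre of w. Each h_j is holomorphic,
   being locally a contour integral depending on w, and bounded: near the circle the fibre
   consists of n simple points at which B' is bounded away from 0. Uniqueness: a
   combination SUM c_j e_j vanishing on such a fibre is, after clearing denominators, a
   polynomial of degree < n with n roots, so it vanishes identically, and the e_j are
   linearly independent. *)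

theory Submission
  imports Defs "HOL-Complex_Analysis.Complex_Analysis"
    "HOL-Computational_Algebra.Fundamental_Theorem_Algebra"
begin

section \<open>Blaschke factors\<close>

definition blaschke_factor :: "complex \<Rightarrow> complex \<Rightarrow> complex" where
  "blaschke_factor c z = (z - c) / (1 - cnj c * z)"

lemma blaschke_partial_altdef: "blaschke_partial a j z = (\<Prod>i=1..j. blaschke_factor (a i) z)"
  by (simp add: blaschke_partial_def blaschke_factor_def)

lemma blaschke_denom_nonzero:
  assumes "cmod c < 1" "cmod z \<le> 1"
  shows "1 - cnj c * z \<noteq> 0"
proof
  assume "1 - cnj c * z = 0"
  then have "cmod c * cmod z = 1"
    by (metis complex_mod_cnj eq_iff_diff_eq_0 norm_mult norm_one)
  moreover have "cmod c * cmod z \<le> cmod c"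
    using assms by (simp add: mult_left_le)
  ultimately show False using assms by simp
qed

lemma holomorphic_on_blaschke_factor:
  assumes "cmod c < 1" "S \<subseteq> cball 0 1"
  shows "blaschke_factor c holomorphic_on S"
  unfolding blaschke_factor_def
  by (intro holomorphic_intros) (use assms blaschke_denom_nonzero in auto)

lemma blaschke_factor_diff:
  assumes "1 - cnj c * z \<noteq> 0" "1 - cnj c * p \<noteq> 0"
  shows "blaschke_factor c z - blaschke_factor c p
       = (z - p) * ((1 - c * cnj c) / ((1 - cnj c * z) * (1 - cnj c * p)))"
  using assms by (simp add: blaschke_factor_def field_simps)

lemma norm_blaschke_numer_denom:
  "(cmod (z - c))\<^sup>2 - (cmod (1 - cnj c * z))\<^sup>2 = ((cmod z)\<^sup>2 - 1) * (1 - (cmod c)\<^sup>2)"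
  unfolding cmod_power2 by (simp add: power2_eq_square algebra_simps)

lemma norm_blaschke_factor_le_1:
  assumes "cmod c < 1" "cmod z \<le> 1"
  shows "cmod (blaschke_factor c z) \<le> 1"
proof -
  have "(cmod z)\<^sup>2 \<le> 1" "(cmod c)\<^sup>2 \<le> 1"
    using assms by (intro power_le_one; simp)+
  then have "((cmod z)\<^sup>2 - 1) * (1 - (cmod c)\<^sup>2) \<le> 0"
    by (intro mult_nonpos_nonneg) simp_all
  then have "(cmod (z - c))\<^sup>2 \<le> (cmod (1 - cnj c * z))\<^sup>2"
    using norm_blaschke_numer_denom[of z c] by linarith
  then have "cmod (z - c) \<le> cmod (1 - cnj c * z)"
    by (rule power2_le_imp_le) simp
  then show ?thesis
    using blaschke_denom_nonzero[OF assms] by (simp add: blaschke_factor_def norm_divide divide_le_eq)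
qed

lemma norm_blaschke_factor_ge_1:
  assumes "cmod c < 1" "1 \<le> cmod z" "1 - cnj c * z \<noteq> 0"
  shows "1 \<le> cmod (blaschke_factor c z)"
proof -
  have "1 \<le> (cmod z)\<^sup>2" "(cmod c)\<^sup>2 \<le> 1"
    using assms by (intro one_le_power power_le_one; simp)+
  then have "0 \<le> ((cmod z)\<^sup>2 - 1) * (1 - (cmod c)\<^sup>2)"
    by (intro mult_nonneg_nonneg) simp_all
  then have "(cmod (1 - cnj c * z))\<^sup>2 \<le> (cmod (z - c))\<^sup>2"
    using norm_blaschke_numer_denom[of z c] by linarith
  then have "cmod (1 - cnj c * z) \<le> cmod (z - c)"
    by (rule power2_le_imp_le) simp
  then show ?thesis
    using assms(3) by (simp add: blaschke_factor_def norm_divide le_divide_eq)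
qed

lemma norm_blaschke_factor_circle:
  assumes "cmod c < 1" "cmod z = 1"
  shows "cmod (blaschke_factor c z) = 1"
  using norm_blaschke_factor_le_1[of c z] norm_blaschke_factor_ge_1[of c z]
    blaschke_denom_nonzero[of c z] assms by simp

lemma norm_prod_blaschke_factor_le_1:
  assumes "\<forall>i\<in>I. cmod (c i) < 1" "cmod z \<le> 1"
  shows "cmod (\<Prod>i\<in>I. blaschke_factor (c i) z) \<le> 1"
  unfolding prod_norm[symmetric]
  by (rule prod_le_1) (use assms norm_blaschke_factor_le_1 in auto)

lemma norm_prod_blaschke_factor_ge_1:
  assumes "\<forall>i\<in>I. cmod (c i) < 1" "1 \<le> cmod z" "\<forall>i\<in>I. 1 - cnj (c i) * z \<noteq> 0"
  shows "1 \<le> cmod (\<Prod>i\<in>I. blaschke_factor (c i) z)"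
  unfolding prod_norm[symmetric]
  by (rule prod_ge_1) (use assms norm_blaschke_factor_ge_1 in auto)

lemma norm_prod_blaschke_factor_circle:
  assumes "\<forall>i\<in>I. cmod (c i) < 1" "cmod z = 1"
  shows "cmod (\<Prod>i\<in>I. blaschke_factor (c i) z) = 1"
  unfolding prod_norm[symmetric]
  by (rule prod.neutral) (use assms norm_blaschke_factor_circle in auto)

section \<open>The difference quotient of a finite Blaschke product\<close>

lemma prod_split_at:
  fixes f :: "nat \<Rightarrow> 'a::comm_monoid_mult"
  assumes "j < n"
  shows "(\<Prod>i=1..n. f i) = (\<Prod>i=1..j. f i) * f (Suc j) * (\<Prod>i=Suc (Suc j)..n. f i)"
proof -
  have "(\<Prod>i=1..j + (n - j). f i) = (\<Prod>i=1..j. f i) * (\<Prod>i=j+1..j + (n - j). f i)"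
    by (rule prod.ub_add_nat) simp
  moreover have "(\<Prod>i=Suc j..n. f i) = f (Suc j) * (\<Prod>i=Suc (Suc j)..n. f i)"
    using assms by (intro prod.atLeast_Suc_atMost) simp
  ultimately show ?thesis using assms by (simp add: mult.assoc)
qed

definition blaschke_tail :: "(nat \<Rightarrow> complex) \<Rightarrow> nat \<Rightarrow> nat \<Rightarrow> complex \<Rightarrow> complex" where
  "blaschke_tail a j n z = (\<Prod>i=Suc j..n. blaschke_factor (a i) z)"

definition e0_scale :: "(nat \<Rightarrow> complex) \<Rightarrow> nat \<Rightarrow> complex" where
  "e0_scale a j = complex_of_real (sqrt (1 - (cmod (a (Suc j)))\<^sup>2))"

definition e0_dual :: "(nat \<Rightarrow> complex) \<Rightarrow> nat \<Rightarrow> nat \<Rightarrow> complex \<Rightarrow> complex" where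
  "e0_dual a n j z = e0_scale a j / (1 - cnj (a (Suc j)) * z) * blaschke_tail a (Suc j) n z"

definition blaschke_kernel :: "(nat \<Rightarrow> complex) \<Rightarrow> nat \<Rightarrow> complex \<Rightarrow> complex \<Rightarrow> complex" where
  "blaschke_kernel a n p z = (\<Sum>j<n. e0 a j z * e0_dual a n j p)"

lemma e0_altdef: "e0 a j z = e0_scale a j / (1 - cnj (a (Suc j)) * z) * blaschke_partial a j z"
  by (simp add: e0_def e0_scale_def)

lemma e0_scale_square:
  assumes "cmod (a (Suc j)) \<le> 1"
  shows "e0_scale a j * e0_scale a j = 1 - a (Suc j) * cnj (a (Suc j))"
proof -
  have "(cmod (a (Suc j)))\<^sup>2 \<le> 1" using assms by (simp add: abs_square_le_1)
  then have "e0_scale a j * e0_scale a j = complex_of_real (1 - (cmod (a (Suc j)))\<^sup>2)"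
    unfolding e0_scale_def of_real_mult[symmetric] by simp
  also have "\<dots> = 1 - a (Suc j) * cnj (a (Suc j))"
    by (simp only: of_real_diff of_real_1 complex_norm_square)
  finally show ?thesis .
qed

lemma blaschke_partial_Suc:
  "blaschke_partial a (Suc n) z = blaschke_partial a n z * blaschke_factor (a (Suc n)) z"
  unfolding blaschke_partial_altdef by simp

lemma blaschke_partial_split:
  assumes "j < n"
  shows "blaschke_partial a n z
       = blaschke_partial a j z * blaschke_factor (a (Suc j)) z * blaschke_tail a (Suc j) n z"
  unfolding blaschke_partial_altdef blaschke_tail_def by (rule prod_split_at[OF assms])

lemma blaschke_tail_Suc:
  "j \<le> n \<Longrightarrow> blaschke_tail a j (Suc n) z = blaschke_tail a j n z * blaschke_factor (a (Suc n)) z"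
  unfolding blaschke_tail_def by simp

lemma blaschke_partial_diff:
  assumes "\<forall>i\<in>{1..n}. cmod (a i) \<le> 1"
    and "\<forall>i\<in>{1..n}. 1 - cnj (a i) * z \<noteq> 0" "\<forall>i\<in>{1..n}. 1 - cnj (a i) * p \<noteq> 0"
  shows "blaschke_partial a n z - blaschke_partial a n p = (z - p) * blaschke_kernel a n p z"
  using assms
proof (induction n)
  case 0
  then show ?case by (simp add: blaschke_partial_def blaschke_kernel_def)
next
  case (Suc n)
  define c where "c = a (Suc n)"
  have cz: "1 - cnj c * z \<noteq> 0" and cp: "1 - cnj c * p \<noteq> 0" and c1: "cmod c \<le> 1"
    using Suc.prems by (auto simp: c_def)
  have IH: "blaschke_partial a n z - blaschke_partial a n p = (z - p) * blaschke_kernel a n p z"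
    using Suc.prems by (intro Suc.IH) auto
  have kernel_Suc: "blaschke_kernel a (Suc n) p z
      = blaschke_kernel a n p z * blaschke_factor c p + e0 a n z * (e0_scale a n / (1 - cnj c * p))"
  proof -
    have "e0_dual a (Suc n) j p = e0_dual a n j p * blaschke_factor c p" if "j < n" for j
      using that by (simp add: e0_dual_def blaschke_tail_Suc c_def)
    moreover have "e0_dual a (Suc n) n p = e0_scale a n / (1 - cnj c * p)"
      by (simp add: e0_dual_def blaschke_tail_def c_def)
    ultimately show ?thesis
      by (simp add: blaschke_kernel_def sum_distrib_right mult.assoc)
  qed
  have scale: "e0_scale a n * e0_scale a n = 1 - c * cnj c"
    using e0_scale_square[of a n] c1 by (simp add: c_def)
  have "blaschke_partial a (Suc n) z - blaschke_partial a (Suc n) p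
      = (blaschke_partial a n z - blaschke_partial a n p) * blaschke_factor c p
        + blaschke_partial a n z * (blaschke_factor c z - blaschke_factor c p)"
    by (simp add: blaschke_partial_Suc c_def algebra_simps)
  also have "blaschke_factor c z - blaschke_factor c p
      = (z - p) * ((1 - c * cnj c) / ((1 - cnj c * z) * (1 - cnj c * p)))"
    by (rule blaschke_factor_diff[OF cz cp])
  also have "blaschke_partial a n z * ((z - p) * ((1 - c * cnj c) / ((1 - cnj c * z) * (1 - cnj c * p))))
      = (z - p) * (e0 a n z * (e0_scale a n / (1 - cnj c * p)))"
    unfolding e0_altdef scale[symmetric] c_def[symmetric] using cz cp by (simp add: field_simps)
  finally show ?case unfolding IH kernel_Suc by (simp add: algebra_simps)
qed

lemma holomorphic_on_blaschke_partial:
  assumes "\<forall>i\<in>{1..j}. cmod (a i) < 1" "S \<subseteq> cball 0 1"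
  shows "blaschke_partial a j holomorphic_on S"
  unfolding blaschke_partial_altdef
  by (intro holomorphic_on_prod holomorphic_on_blaschke_factor) (use assms in auto)

lemma holomorphic_on_e0:
  assumes "\<forall>i\<in>{1..Suc j}. cmod (a i) < 1" "S \<subseteq> cball 0 1"
  shows "e0 a j holomorphic_on S"
  unfolding e0_altdef
  by (intro holomorphic_intros holomorphic_on_blaschke_partial)
     (use assms blaschke_denom_nonzero in auto)

lemma holomorphic_on_e0_dual:
  assumes "\<forall>i\<in>{1..n}. cmod (a i) < 1" "j < n" "S \<subseteq> cball 0 1"
  shows "e0_dual a n j holomorphic_on S"
  unfolding e0_dual_def blaschke_tail_def
  by (intro holomorphic_intros holomorphic_on_prod holomorphic_on_blaschke_factor)
     (use assms blaschke_denom_nonzero in auto)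

lemma e0_shift: "e0 a (Suc j) z = blaschke_factor (a 1) z * e0 (\<lambda>i. a (Suc i)) j z"
proof -
  have "blaschke_partial a (Suc j) z
      = blaschke_factor (a 1) z * (\<Prod>i=Suc 1..Suc j. blaschke_factor (a i) z)"
    unfolding blaschke_partial_altdef by (intro prod.atLeast_Suc_atMost) simp
  also have "(\<Prod>i=Suc 1..Suc j. blaschke_factor (a i) z) = blaschke_partial (\<lambda>i. a (Suc i)) j z"
    unfolding blaschke_partial_altdef by (rule prod.shift_bounds_cl_Suc_ivl)
  finally show ?thesis by (simp add: e0_altdef e0_scale_def ac_simps)
qed

lemma continuous_on_vanishing_off_point:
  fixes f :: "complex \<Rightarrow> complex"
  assumes "continuous_on S f" "open S" "x \<in> S" "\<And>z. z \<in> S - {x} \<Longrightarrow> f z = 0"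
  shows "f x = 0"
proof -
  have "(f \<longlongrightarrow> f x) (at x)"
    using assms(1-3) by (simp add: continuous_on_eq_continuous_at isCont_def)
  moreover have "(f \<longlongrightarrow> 0) (at x)"
    by (rule Lim_transform_within_open[of "\<lambda>_. 0" 0 x UNIV S]) (use assms(2-4) in auto)
  ultimately show ?thesis by (rule tendsto_unique[rotated]) simp
qed

lemma e0_0_first_zero_nonzero:
  assumes "cmod (a 1) < 1"
  shows "e0 a 0 (a 1) \<noteq> 0"
proof -
  have "(cmod (a 1))\<^sup>2 < 1" using assms by (simp add: abs_square_less_1)
  then have "e0_scale a 0 \<noteq> 0" by (simp add: e0_scale_def)
  moreover have "1 - cnj (a 1) * a 1 \<noteq> 0" using assms by (intro blaschke_denom_nonzero) auto
  ultimately show ?thesis by (simp add: e0_altdef blaschke_partial_def)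
qed

text \<open>Evaluating at \<open>a 1\<close> kills every \<open>e0 a j\<close> with \<open>j > 0\<close>; dividing by the first
  Blaschke factor reduces to the shifted sequence.\<close>

lemma e0_linear_independent:
  assumes "\<forall>i\<in>{1..N}. cmod (a i) < 1" "\<forall>z\<in>ball 0 1. (\<Sum>j<N. c j * e0 a j z) = 0"
  shows "\<forall>j<N. c j = 0"
  using assms
proof (induction N arbitrary: a c)
  case 0
  then show ?case by simp
next
  case (Suc N)
  have a1: "a 1 \<in> ball 0 1" using Suc.prems(1) by simp
  have split: "(\<Sum>j<Suc N. c j * e0 a j z) = c 0 * e0 a 0 z + (\<Sum>j<N. c (Suc j) * e0 a (Suc j) z)" for z
    by (rule sum.lessThan_Suc_shift)
  have "e0 a (Suc j) (a 1) = 0" for j by (simp add: e0_shift blaschke_factor_def)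
  then have "c 0 * e0 a 0 (a 1) = 0" using Suc.prems(2) a1 split[of "a 1"] by simp
  then have c0: "c 0 = 0" using e0_0_first_zero_nonzero a1 by simp
  define a' where "a' i = a (Suc i)" for i
  define G where "G z = (\<Sum>j<N. c (Suc j) * e0 a' j z)" for z
  have a': "\<forall>i\<in>{1..N}. cmod (a' i) < 1" using Suc.prems(1) by (auto simp: a'_def)
  have factor: "(\<Sum>j<Suc N. c j * e0 a j z) = blaschke_factor (a 1) z * G z" for z
  proof -
    have "(\<Sum>j<N. c (Suc j) * e0 a (Suc j) z) = blaschke_factor (a 1) z * G z"
      unfolding G_def a'_def e0_shift sum_distrib_left by (simp add: mult.left_commute)
    then show ?thesis unfolding split c0 by simp
  qed
  have G_zero: "G z = 0" if z: "z \<in> ball 0 1 - {a 1}" for z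
  proof -
    have "blaschke_factor (a 1) z \<noteq> 0"
      using z blaschke_denom_nonzero[of "a 1" z] a1 by (simp add: blaschke_factor_def)
    moreover have "blaschke_factor (a 1) z * G z = 0"
      using Suc.prems(2) z factor[of z] by simp
    ultimately show ?thesis by simp
  qed
  have "continuous_on (ball 0 1) G"
    unfolding G_def
    by (intro continuous_intros holomorphic_on_imp_continuous_on holomorphic_on_e0) (use a' in auto)
  then have "G (a 1) = 0" by (rule continuous_on_vanishing_off_point[OF _ open_ball a1 G_zero])
  then have "G z = 0" if "z \<in> ball 0 1" for z
    using that G_zero by (cases "z = a 1") auto
  then have "\<forall>z\<in>ball 0 1. (\<Sum>j<N. c (Suc j) * e0 a' j z) = 0" unfolding G_def by blast
  then have "\<forall>j<N. c (Suc j) = 0" by (rule Suc.IH[OF a'])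
  then show ?case using c0 by (auto simp: less_Suc_eq_0_disj)
qed

lemma norm_lower_bound_near_circle:
  fixes g :: "complex \<Rightarrow> complex"
  assumes cont: "continuous_on (cball 0 1) g" and circle: "\<And>z. cmod z = 1 \<Longrightarrow> c \<le> cmod (g z)"
    and "\<epsilon> > 0"
  shows "\<exists>r. 0 < r \<and> r < 1 \<and> (\<forall>z. r \<le> cmod z \<and> cmod z \<le> 1 \<longrightarrow> c - \<epsilon> < cmod (g z))"
proof -
  have "uniformly_continuous_on (cball 0 1) g"
    using cont by (intro compact_uniformly_continuous) auto
  then obtain d where d: "d > 0"
    and close: "\<And>x y. x \<in> cball 0 1 \<Longrightarrow> y \<in> cball 0 1 \<Longrightarrow> dist y x < d \<Longrightarrow> dist (g y) (g x) < \<epsilon>"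
    unfolding uniformly_continuous_on_def using \<open>\<epsilon> > 0\<close> by metis
  define r where "r = max (1/2) (1 - d/2)"
  have r: "0 < r" "r < 1" using d by (auto simp: r_def)
  have "c - \<epsilon> < cmod (g z)" if z: "r \<le> cmod z" "cmod z \<le> 1" for z
  proof -
    have "cmod z > 0" using z r by linarith
    define u where "u = z / complex_of_real (cmod z)"
    have u: "cmod u = 1" using \<open>cmod z > 0\<close> by (simp add: u_def norm_divide)
    have "z - u = complex_of_real (cmod z - 1) * u"
      using \<open>cmod z > 0\<close> by (simp add: u_def field_simps)
    then have "dist z u = \<bar>cmod z - 1\<bar>"
      by (simp only: dist_norm norm_mult norm_of_real u) simp
    also have "\<dots> = 1 - cmod z" using z by simp
    also have "\<dots> < d" using z d by (simp add: r_def)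
    finally have "dist (g z) (g u) < \<epsilon>" using close[of u z] z u by auto
    moreover have "c \<le> cmod (g u)" using circle u by simp
    moreover have "cmod (g u) \<le> cmod (g z) + dist (g z) (g u)"
      using norm_triangle_ineq4[of "g z" "g z - g u"] by (simp add: dist_norm)
    ultimately show ?thesis by linarith
  qed
  then show ?thesis using r by blast
qed

lemma holomorphic_on_circlepath_integral_param:
  fixes \<psi> F :: "complex \<Rightarrow> complex"
  assumes \<psi>: "continuous_on (sphere 0 \<rho>) \<psi>" and F: "continuous_on (sphere 0 \<rho>) F"
    and U: "convex U" and avoid: "\<And>w \<zeta>. w \<in> U \<Longrightarrow> \<zeta> \<in> sphere 0 \<rho> \<Longrightarrow> F \<zeta> \<noteq> w" and "\<rho> > 0"
  shows "(\<lambda>w. contour_integral (circlepath 0 \<rho>) (\<lambda>\<zeta>. \<psi> \<zeta> / (F \<zeta> - w))) holomorphic_on U"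
proof -
  define \<gamma> where "\<gamma> = circlepath 0 \<rho>"
  define d where "d t = 2 * pi * \<i> * \<rho> * exp (2 * of_real pi * \<i> * t)" for t :: real
  define I where "I w t = \<psi> (\<gamma> t) * d t / (F (\<gamma> t) - w)" for w t
  define I' where "I' w t = \<psi> (\<gamma> t) * d t / ((F (\<gamma> t) - w) * (F (\<gamma> t) - w))" for w t
  have on_sphere: "\<gamma> t \<in> sphere 0 \<rho>" if "t \<in> {0..1}" for t
    using that \<open>\<rho> > 0\<close> path_image_circlepath[of 0 \<rho>] unfolding path_image_def \<gamma>_def by auto
  have "continuous_on {0..1} \<gamma>"
    using valid_path_imp_path[OF valid_path_circlepath] unfolding \<gamma>_def path_def by blast
  then have \<psi>\<gamma>: "continuous_on {0..1} (\<lambda>t. \<psi> (\<gamma> t))" and F\<gamma>: "continuous_on {0..1} (\<lambda>t. F (\<gamma> t))"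
    by (auto intro!: continuous_on_compose2[OF \<psi>] continuous_on_compose2[OF F] on_sphere)
  have cd: "continuous_on {0..1} d" unfolding d_def by (intro continuous_intros)
  have integral_eq: "contour_integral (circlepath 0 \<rho>) (\<lambda>\<zeta>. \<psi> \<zeta> / (F \<zeta> - w)) = integral (cbox 0 1) (I w)" for w
    unfolding contour_integral_integral I_def d_def \<gamma>_def vector_derivative_circlepath cbox_interval
    by (simp add: algebra_simps)
  have "(\<lambda>w. integral (cbox 0 1) (I w)) holomorphic_on U"
  proof (rule leibniz_rule_holomorphic[where fx = I'])
    fix w t assume w: "w \<in> U" and t: "(t::real) \<in> cbox 0 1"
    have "F (\<gamma> t) - w \<noteq> 0" using avoid[OF w on_sphere[of t]] t by (simp add: cbox_interval)
    then have "((\<lambda>w. \<psi> (\<gamma> t) * d t / (F (\<gamma> t) - w)) has_field_derivative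
         (0 * (F (\<gamma> t) - w) - \<psi> (\<gamma> t) * d t * (0 - 1)) / ((F (\<gamma> t) - w) * (F (\<gamma> t) - w))) (at w within U)"
      by (intro DERIV_divide DERIV_const DERIV_diff DERIV_ident)
    then show "((\<lambda>w. I w t) has_field_derivative I' w t) (at w within U)"
      unfolding I_def I'_def by simp
  next
    fix w assume w: "w \<in> U"
    have "continuous_on {0..1} (I w)" unfolding I_def
      by (intro continuous_intros \<psi>\<gamma> F\<gamma> cd) (use avoid[OF w on_sphere] in \<open>auto simp: cbox_interval\<close>)
    then show "I w integrable_on cbox 0 1" unfolding cbox_interval by (rule integrable_continuous_real)
  next
    have compose_snd: "continuous_on (U \<times> cbox 0 1) (\<lambda>x. h (snd x))"
      if "continuous_on {0..1} h" for h :: "real \<Rightarrow> complex"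
      by (rule continuous_on_compose2[OF that continuous_on_snd]) (auto simp: cbox_interval)
    have "continuous_on (U \<times> cbox 0 1)
        (\<lambda>x. \<psi> (\<gamma> (snd x)) * d (snd x) / ((F (\<gamma> (snd x)) - fst x) * (F (\<gamma> (snd x)) - fst x)))"
      by (intro continuous_intros compose_snd \<psi>\<gamma> F\<gamma> cd) (use avoid on_sphere in \<open>auto simp: cbox_interval\<close>)
    then show "continuous_on (U \<times> cbox 0 1) (\<lambda>(w, t). I' w t)"
      by (simp add: I'_def case_prod_beta)
  qed (rule U)
  then show ?thesis unfolding integral_eq .
qed

section \<open>Blaschke products vanishing at the origin\<close>

locale finite_blaschke_product =
  fixes a :: "nat \<Rightarrow> complex" and n :: nat
  assumes n_pos: "1 \<le> n"
    and zeros_in_disc: "\<forall>i\<in>{1..n}. cmod (a i) < 1"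
    and first_zero: "a 1 = 0"
begin

abbreviation B :: "complex \<Rightarrow> complex" where
  "B \<equiv> blaschke_partial a n"

lemma B_holomorphic: "S \<subseteq> cball 0 1 \<Longrightarrow> B holomorphic_on S"
  using holomorphic_on_blaschke_partial zeros_in_disc by blast

lemma e0_holomorphic: "j < n \<Longrightarrow> S \<subseteq> cball 0 1 \<Longrightarrow> e0 a j holomorphic_on S"
  by (rule holomorphic_on_e0) (use zeros_in_disc in auto)

lemma e0_dual_holomorphic: "j < n \<Longrightarrow> S \<subseteq> cball 0 1 \<Longrightarrow> e0_dual a n j holomorphic_on S"
  by (rule holomorphic_on_e0_dual) (use zeros_in_disc in auto)

lemma kernel_holomorphic: "S \<subseteq> cball 0 1 \<Longrightarrow> blaschke_kernel a n p holomorphic_on S"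
  unfolding blaschke_kernel_def by (intro holomorphic_intros e0_holomorphic) auto

lemma B_diff:
  assumes "cmod z \<le> 1" "cmod p \<le> 1"
  shows "B z - B p = (z - p) * blaschke_kernel a n p z"
proof (rule blaschke_partial_diff)
  show "\<forall>i\<in>{1..n}. cmod (a i) \<le> 1"
    using zeros_in_disc by (auto intro: less_imp_le)
  show "\<forall>i\<in>{1..n}. 1 - cnj (a i) * z \<noteq> 0" "\<forall>i\<in>{1..n}. 1 - cnj (a i) * p \<noteq> 0"
    using zeros_in_disc assms blaschke_denom_nonzero by auto
qed

lemma norm_B_circle: "cmod z = 1 \<Longrightarrow> cmod (B z) = 1"
  unfolding blaschke_partial_altdef
  by (rule norm_prod_blaschke_factor_circle) (use zeros_in_disc in auto)

lemma norm_B_le: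
  assumes "cmod z \<le> 1"
  shows "cmod (B z) \<le> cmod z"
proof -
  have "B z = blaschke_factor (a 1) z * (\<Prod>i=Suc 1..n. blaschke_factor (a i) z)"
    unfolding blaschke_partial_altdef using n_pos by (intro prod.atLeast_Suc_atMost)
  also have "blaschke_factor (a 1) z = z"
    using first_zero by (simp add: blaschke_factor_def)
  finally have "cmod (B z) = cmod z * cmod (\<Prod>i=Suc 1..n. blaschke_factor (a i) z)"
    by (simp add: norm_mult)
  also have "\<dots> \<le> cmod z * 1"
    by (intro mult_left_mono norm_prod_blaschke_factor_le_1) (use assms zeros_in_disc in auto)
  finally show ?thesis by simp
qed

lemma B_in_ball: "z \<in> ball 0 1 \<Longrightarrow> B z \<in> ball 0 1"
  using norm_B_le[of z] by simp

text \<open>The diagonal of the kernel is the derivative \<open>B'\<close>. On the circle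
  \<open>z * cnj (B z) * B' z\<close> is the sum over \<open>j\<close> of these nonnegative terms; the one for
  \<open>j = 0\<close> equals 1 because \<open>a 1 = 0\<close>.\<close>

lemma kernel_diag_term_circle:
  assumes z: "cmod z = 1" and j: "j < n"
  shows "e0 a j z * e0_dual a n j z * (z * cnj (B z))
       = complex_of_real ((1 - (cmod (a (Suc j)))\<^sup>2) / (cmod (1 - cnj (a (Suc j)) * z))\<^sup>2)"
proof -
  have unit: "u * cnj u = 1" if "cmod u = 1" for u
    using that by (metis complex_norm_square of_real_1 power_one)
  define c where "c = a (Suc j)"
  define d where "d = 1 - cnj c * z"
  define X where "X = blaschke_partial a j z"
  define T where "T = blaschke_tail a (Suc j) n z"
  have c: "cmod c < 1" using zeros_in_disc j by (auto simp: c_def)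
  have "d \<noteq> 0" using blaschke_denom_nonzero[OF c] z by (simp add: d_def)
  then have d: "d \<noteq> 0" "cnj d \<noteq> 0" by simp_all
  have X: "X * cnj X = 1"
    unfolding X_def blaschke_partial_altdef
    by (intro unit norm_prod_blaschke_factor_circle) (use z zeros_in_disc j in auto)
  have T: "T * cnj T = 1"
    unfolding T_def blaschke_tail_def
    by (intro unit norm_prod_blaschke_factor_circle) (use z zeros_in_disc in auto)
  have zc: "z * cnj (z - c) = d"
    using unit[OF z] by (simp add: d_def algebra_simps)
  have scale: "e0_scale a j * e0_scale a j = 1 - c * cnj c"
    using e0_scale_square[of a j] c by (simp add: c_def)
  have "B z = X * ((z - c) / d) * T"
    using blaschke_partial_split[OF j] by (simp add: X_def T_def c_def d_def blaschke_factor_def)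
  moreover have "e0 a j z = e0_scale a j / d * X"
    by (simp add: e0_altdef X_def d_def c_def)
  moreover have "e0_dual a n j z = e0_scale a j / d * T"
    by (simp add: e0_dual_def T_def d_def c_def)
  ultimately have "e0 a j z * e0_dual a n j z * (z * cnj (B z))
      = (e0_scale a j * e0_scale a j) / (d * d) * (X * cnj X) * (T * cnj T) * (z * cnj (z - c)) / cnj d"
    by (simp add: field_simps)
  also have "\<dots> = (1 - c * cnj c) / (d * cnj d)"
    unfolding X T zc scale using d by (simp add: field_simps)
  also have "\<dots> = complex_of_real ((1 - (cmod c)\<^sup>2) / (cmod d)\<^sup>2)"
    by (simp only: complex_norm_square[symmetric] of_real_divide of_real_diff of_real_1)
  finally show ?thesis by (simp add: c_def d_def)
qed

lemma norm_kernel_diag_circle: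
  assumes z: "cmod z = 1"
  shows "1 \<le> cmod (blaschke_kernel a n z z)"
proof -
  define r where "r j = (1 - (cmod (a (Suc j)))\<^sup>2) / (cmod (1 - cnj (a (Suc j)) * z))\<^sup>2" for j
  have r_nonneg: "0 \<le> r j" if "j < n" for j
  proof -
    have "cmod (a (Suc j)) \<le> 1" using zeros_in_disc that by (auto intro: less_imp_le)
    then have "(cmod (a (Suc j)))\<^sup>2 \<le> 1" by (intro power_le_one) simp_all
    then show ?thesis unfolding r_def by simp
  qed
  have "blaschke_kernel a n z z * (z * cnj (B z)) = (\<Sum>j<n. e0 a j z * e0_dual a n j z * (z * cnj (B z)))"
    unfolding blaschke_kernel_def by (simp add: sum_distrib_right)
  also have "\<dots> = complex_of_real (\<Sum>j<n. r j)"
    using kernel_diag_term_circle[OF z] by (simp add: r_def)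
  finally have eq: "blaschke_kernel a n z z * (z * cnj (B z)) = complex_of_real (\<Sum>j<n. r j)" .
  have "cmod (blaschke_kernel a n z z) = cmod (blaschke_kernel a n z z * (z * cnj (B z)))"
    using z norm_B_circle[OF z] by (simp add: norm_mult)
  also have "\<dots> = \<bar>\<Sum>j<n. r j\<bar>"
    unfolding eq by (rule norm_of_real)
  finally have "cmod (blaschke_kernel a n z z) = \<bar>\<Sum>j<n. r j\<bar>" .
  moreover have "r 0 \<le> (\<Sum>j<n. r j)"
    using n_pos r_nonneg by (intro member_le_sum) auto
  moreover have "r 0 = 1" using first_zero by (simp add: r_def)
  ultimately show ?thesis by linarith
qed

definition annulus_radius :: real where
  "annulus_radius = (SOME r. 0 < r \<and> r < 1 \<and>
     (\<forall>z. r \<le> cmod z \<and> cmod z \<le> 1 \<longrightarrow> 1/2 < cmod (blaschke_kernel a n z z)))"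

lemma annulus_radius:
  shows "0 < annulus_radius" "annulus_radius < 1"
    and "\<And>z. annulus_radius \<le> cmod z \<Longrightarrow> cmod z \<le> 1 \<Longrightarrow> 1/2 < cmod (blaschke_kernel a n z z)"
proof -
  have "continuous_on (cball 0 1) (\<lambda>z. blaschke_kernel a n z z)"
    unfolding blaschke_kernel_def
    by (intro continuous_intros holomorphic_on_imp_continuous_on e0_holomorphic e0_dual_holomorphic) auto
  then have "\<exists>r. 0 < r \<and> r < 1 \<and>
      (\<forall>z. r \<le> cmod z \<and> cmod z \<le> 1 \<longrightarrow> 1 - 1/2 < cmod (blaschke_kernel a n z z))"
    by (rule norm_lower_bound_near_circle) (use norm_kernel_diag_circle in auto)
  then have "\<exists>r. 0 < r \<and> r < 1 \<and>
      (\<forall>z. r \<le> cmod z \<and> cmod z \<le> 1 \<longrightarrow> 1/2 < cmod (blaschke_kernel a n z z))"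
    by simp
  from someI_ex[OF this] show "0 < annulus_radius" "annulus_radius < 1"
    "\<And>z. annulus_radius \<le> cmod z \<Longrightarrow> cmod z \<le> 1 \<Longrightarrow> 1/2 < cmod (blaschke_kernel a n z z)"
    unfolding annulus_radius_def[symmetric] by auto
qed

lemma norm_B_near_circle:
  assumes "m < 1"
  obtains r where "0 < r" "r < 1" "\<And>z. r \<le> cmod z \<Longrightarrow> cmod z \<le> 1 \<Longrightarrow> m < cmod (B z)"
proof -
  have "\<exists>r. 0 < r \<and> r < 1 \<and> (\<forall>z. r \<le> cmod z \<and> cmod z \<le> 1 \<longrightarrow> 1 - (1 - m) < cmod (B z))"
    by (rule norm_lower_bound_near_circle)
       (use holomorphic_on_imp_continuous_on[OF B_holomorphic] norm_B_circle assms in auto)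
  then show ?thesis using that by auto
qed

section \<open>Fibres of \<open>B\<close>\<close>

definition numer_poly :: "complex poly" where
  "numer_poly = (\<Prod>i\<in>{1..n}. [:- a i, 1:])"

definition denom_poly :: "complex poly" where
  "denom_poly = (\<Prod>i\<in>{1..n}. [:1, - cnj (a i):])"

definition fibre_poly :: "complex \<Rightarrow> complex poly" where
  "fibre_poly w = numer_poly - smult w denom_poly"

definition fibre :: "complex \<Rightarrow> complex set" where
  "fibre w = {z \<in> ball 0 1. B z = w}"

lemma poly_numer_poly: "poly numer_poly z = (\<Prod>i=1..n. z - a i)"
  unfolding numer_poly_def poly_prod by (intro prod.cong) auto

lemma poly_denom_poly: "poly denom_poly z = (\<Prod>i=1..n. 1 - cnj (a i) * z)"
  unfolding denom_poly_def poly_prod by (intro prod.cong) (auto simp: algebra_simps)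

lemma poly_denom_poly_nonzero: "cmod z \<le> 1 \<Longrightarrow> poly denom_poly z \<noteq> 0"
  unfolding poly_denom_poly using zeros_in_disc blaschke_denom_nonzero by auto

lemma B_eq_poly_quotient: "B z = poly numer_poly z / poly denom_poly z"
  unfolding blaschke_partial_def poly_numer_poly poly_denom_poly by (rule prod_dividef)

lemma degree_numer_poly: "degree numer_poly = n"
proof -
  have "degree numer_poly = (\<Sum>i\<in>{1..n}. degree [:- a i, 1:])"
    unfolding numer_poly_def by (rule degree_prod_sum_eq) auto
  then show ?thesis by simp
qed

lemma lead_coeff_numer_poly: "lead_coeff numer_poly = 1"
  unfolding numer_poly_def lead_coeff_prod by simp

lemma degree_denom_poly_less: "degree denom_poly < n"
proof -
  have "denom_poly = [:1, - cnj (a 1):] * (\<Prod>i\<in>{Suc 1..n}. [:1, - cnj (a i):])"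
    unfolding denom_poly_def using n_pos by (intro prod.atLeast_Suc_atMost)
  also have "[:1, - cnj (a 1):] = 1" using first_zero by (simp add: one_pCons)
  finally have "degree denom_poly \<le> (\<Sum>i\<in>{Suc 1..n}. degree [:1, - cnj (a i):])"
    using degree_prod_sum_le[of "{Suc 1..n}" "\<lambda>i. [:1, - cnj (a i):]"] by (simp add: o_def)
  also have "\<dots> \<le> (\<Sum>i\<in>{Suc 1..n}. 1)"
    by (intro sum_mono) (simp add: degree_pCons_le)
  also have "\<dots> = n - 1" by simp
  finally show ?thesis using n_pos by simp
qed

lemma coeff_fibre_poly: "coeff (fibre_poly w) n = 1"
  using lead_coeff_numer_poly degree_numer_poly degree_denom_poly_less
  by (simp add: fibre_poly_def coeff_eq_0)

lemma fibre_poly_nonzero: "fibre_poly w \<noteq> 0"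
  using coeff_fibre_poly[of w] by auto

lemma degree_fibre_poly: "degree (fibre_poly w) = n"
proof (rule antisym)
  have "degree (fibre_poly w) \<le> max (degree numer_poly) (degree (smult w denom_poly))"
    unfolding fibre_poly_def by (rule degree_diff_le_max)
  also have "\<dots> \<le> n"
    using degree_numer_poly degree_denom_poly_less degree_smult_le[of w denom_poly] by simp
  finally show "degree (fibre_poly w) \<le> n" .
  show "n \<le> degree (fibre_poly w)" using coeff_fibre_poly by (intro le_degree) simp
qed

lemma poly_fibre_poly:
  "cmod z \<le> 1 \<Longrightarrow> poly (fibre_poly w) z = poly denom_poly z * (B z - w)"
  using poly_denom_poly_nonzero[of z] by (simp add: fibre_poly_def B_eq_poly_quotient field_simps)

lemma roots_fibre_poly:
  assumes w: "cmod w < 1"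
  shows "{z. poly (fibre_poly w) z = 0} = fibre w"
proof (intro set_eqI iffI)
  fix z assume "z \<in> fibre w"
  then show "z \<in> {z. poly (fibre_poly w) z = 0}" using poly_fibre_poly by (simp add: fibre_def)
next
  fix z assume "z \<in> {z. poly (fibre_poly w) z = 0}"
  then have root: "poly numer_poly z = w * poly denom_poly z" by (simp add: fibre_poly_def)
  have denom: "poly denom_poly z \<noteq> 0"
  proof
    assume "poly denom_poly z = 0"
    then obtain k where "k \<in> {1..n}" "z = a k"
      using root unfolding poly_numer_poly by auto
    then have "cmod z \<le> 1" using zeros_in_disc by (auto intro: less_imp_le)
    then show False using poly_denom_poly_nonzero \<open>poly denom_poly z = 0\<close> by blast
  qed
  then have Bz: "B z = w" using root by (simp add: B_eq_poly_quotient)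
  have "cmod z < 1"
  proof (rule ccontr)
    assume "\<not> cmod z < 1"
    then have "1 \<le> cmod (B z)"
      unfolding blaschke_partial_altdef using denom zeros_in_disc
      by (intro norm_prod_blaschke_factor_ge_1) (auto simp: poly_denom_poly)
    then show False using Bz w by simp
  qed
  then show "z \<in> fibre w" using Bz by (simp add: fibre_def)
qed

lemma finite_fibre: "cmod w < 1 \<Longrightarrow> finite (fibre w)"
  using roots_fibre_poly[of w] poly_roots_finite[OF fibre_poly_nonzero[of w]] by simp

lemma norm_kernel_diag_fibre:
  assumes "annulus_radius < cmod w" "p \<in> fibre w"
  shows "1/2 < cmod (blaschke_kernel a n p p)"
proof -
  have p: "cmod p < 1" "B p = w" using assms by (auto simp: fibre_def)
  then have "annulus_radius < cmod p" using norm_B_le[of p] assms by simp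
  then show ?thesis using annulus_radius(3)[of p] p by simp
qed

lemma poly_pderiv_fibre_poly:
  assumes p: "p \<in> fibre w"
  shows "poly (pderiv (fibre_poly w)) p = poly denom_poly p * blaschke_kernel a n p p"
proof -
  have p1: "p \<in> ball 0 1" "B p = w" using p by (auto simp: fibre_def)
  define G where "G z = poly denom_poly z * ((z - p) * blaschke_kernel a n p z)" for z
  have eq: "poly (fibre_poly w) z = G z" if "z \<in> ball 0 1" for z
    using poly_fibre_poly B_diff[of z p] that p1 by (simp add: G_def)
  have "(blaschke_kernel a n p has_field_derivative deriv (blaschke_kernel a n p) p) (at p)"
    by (rule holomorphic_derivI[OF kernel_holomorphic[where S = "ball 0 1"]]) (use p1 in auto)
  then have "(G has_field_derivative
      poly denom_poly p * ((p - p) * deriv (blaschke_kernel a n p) p + (1 - 0) * blaschke_kernel a n p p)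
      + poly (pderiv denom_poly) p * ((p - p) * blaschke_kernel a n p p)) (at p)"
    unfolding G_def by (intro DERIV_mult' DERIV_diff DERIV_ident DERIV_const poly_DERIV)
  then have "(G has_field_derivative poly denom_poly p * blaschke_kernel a n p p) (at p)"
    by simp
  then have "(poly (fibre_poly w) has_field_derivative poly denom_poly p * blaschke_kernel a n p p) (at p)"
    by (rule has_field_derivative_transform_within_open[of _ _ _ "ball 0 1"]) (use p1 eq in auto)
  then show ?thesis using poly_DERIV DERIV_unique by blast
qed

text \<open>Near the circle all roots of \<open>fibre_poly w\<close> are simple, since there \<open>B'\<close> does not vanish.\<close>

lemma card_fibre:
  assumes w: "annulus_radius < cmod w" "cmod w < 1"
  shows "card (fibre w) = n"
proof -
  have "rsquarefree (fibre_poly w)"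
    unfolding rsquarefree_roots
  proof (intro allI notI)
    fix p assume "poly (fibre_poly w) p = 0 \<and> poly (pderiv (fibre_poly w)) p = 0"
    then have p: "p \<in> fibre w" "poly (pderiv (fibre_poly w)) p = 0"
      using roots_fibre_poly[OF w(2)] by auto
    have "poly denom_poly p \<noteq> 0" using p by (intro poly_denom_poly_nonzero) (simp add: fibre_def)
    moreover have "blaschke_kernel a n p p \<noteq> 0" using norm_kernel_diag_fibre[OF w(1) p(1)] by auto
    ultimately show False using poly_pderiv_fibre_poly[OF p(1)] p(2) by simp
  qed
  then have "fibre_poly w = smult (lead_coeff (fibre_poly w)) (\<Prod>z|poly (fibre_poly w) z = 0. [:-z, 1:])"
    by (rule complex_poly_decompose_rsquarefree[symmetric])
  then have "n = degree (\<Prod>z|poly (fibre_poly w) z = 0. [:-z, 1:])"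
    using degree_fibre_poly[of w] fibre_poly_nonzero[of w] by (metis degree_smult_eq leading_coeff_0_iff)
  also have "\<dots> = (\<Sum>z|poly (fibre_poly w) z = 0. degree [:-z, 1:])"
    by (rule degree_prod_sum_eq) auto
  also have "\<dots> = card (fibre w)" using roots_fibre_poly[OF w(2)] by simp
  finally show ?thesis by simp
qed

section \<open>Residue sums over fibres\<close>

definition fibre_residues :: "(complex \<Rightarrow> complex) \<Rightarrow> complex \<Rightarrow> complex" where
  "fibre_residues \<phi> w = (\<Sum>p\<in>fibre w. residue (\<lambda>\<zeta>. \<phi> \<zeta> / (B \<zeta> - w)) p)"

lemma residue_fibre_point:
  assumes holo: "\<phi> holomorphic_on ball 0 1" and p: "p \<in> fibre w"
    and kernel: "blaschke_kernel a n p p \<noteq> 0"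
  shows "residue (\<lambda>\<zeta>. \<phi> \<zeta> / (B \<zeta> - w)) p = \<phi> p / blaschke_kernel a n p p"
proof -
  have p1: "p \<in> ball 0 1" "B p = w" using p by (auto simp: fibre_def)
  have cont: "isCont (blaschke_kernel a n p) p" "isCont \<phi> p"
    using holomorphic_on_imp_continuous_on[OF kernel_holomorphic[where S = "ball 0 1"]]
      holomorphic_on_imp_continuous_on[OF holo] p1
    by (auto simp: continuous_on_eq_continuous_at)
  obtain e where e: "e > 0" "\<And>y. dist p y < e \<Longrightarrow> blaschke_kernel a n p y \<noteq> 0"
    using continuous_at_avoid[OF cont(1) kernel] by auto
  define s where "s = ball 0 1 \<inter> ball p e"
  have s: "open s" "p \<in> s" "s \<subseteq> ball 0 1" using p1 e by (auto simp: s_def)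
  have nz: "blaschke_kernel a n p y \<noteq> 0" if "y \<in> s" for y
    using that e(2) by (simp add: s_def)
  have factor: "B y - w = (y - p) * blaschke_kernel a n p y" if "y \<in> s" for y
    using B_diff[of y p] that s(3) p1 by auto
  show ?thesis
  proof (rule residue_simple')
    show "open s" "p \<in> s" by (fact s(1), fact s(2))
    show "(\<lambda>\<zeta>. \<phi> \<zeta> / (B \<zeta> - w)) holomorphic_on s - {p}"
    proof (intro holomorphic_intros)
      show "\<phi> holomorphic_on s - {p}" by (rule holomorphic_on_subset[OF holo]) (use s in auto)
      show "B holomorphic_on s - {p}" by (rule B_holomorphic) (use s in auto)
      show "B z - w \<noteq> 0" if "z \<in> s - {p}" for z using that factor nz by auto
    qed
    have "((\<lambda>z. \<phi> z / blaschke_kernel a n p z) \<longlongrightarrow> \<phi> p / blaschke_kernel a n p p) (at p)"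
      using cont kernel by (intro tendsto_divide) (auto simp: isCont_def)
    then show "((\<lambda>\<zeta>. \<phi> \<zeta> / (B \<zeta> - w) * (\<zeta> - p)) \<longlongrightarrow> \<phi> p / blaschke_kernel a n p p) (at p)"
    proof (rule Lim_transform_within_open[of _ _ _ _ s])
      fix x assume x: "x \<in> s" "x \<noteq> p"
      show "\<phi> x / blaschke_kernel a n p x = \<phi> x / (B x - w) * (x - p)"
        unfolding factor[OF x(1)] using nz[OF x(1)] x(2) by (simp add: field_simps)
    qed (use s in auto)
  qed
qed

lemma has_contour_integral_fibre_residues:
  assumes holo: "\<phi> holomorphic_on ball 0 1" and w: "cmod w < 1" and \<rho>: "0 < \<rho>" "\<rho> < 1"
    and fibre: "fibre w \<subseteq> ball 0 \<rho>"
  shows "((\<lambda>\<zeta>. \<phi> \<zeta> / (B \<zeta> - w)) has_contour_integral (2 * pi * \<i> * fibre_residues \<phi> w))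
           (circlepath 0 \<rho>)"
proof -
  have holo': "(\<lambda>\<zeta>. \<phi> \<zeta> / (B \<zeta> - w)) holomorphic_on ball 0 1 - fibre w"
  proof (intro holomorphic_intros)
    show "\<phi> holomorphic_on ball 0 1 - fibre w" by (rule holomorphic_on_subset[OF holo]) auto
    show "B holomorphic_on ball 0 1 - fibre w" by (rule B_holomorphic) auto
    show "B z - w \<noteq> 0" if "z \<in> ball 0 1 - fibre w" for z using that by (auto simp: fibre_def)
  qed
  have path: "path_image (circlepath 0 \<rho>) \<subseteq> ball 0 1 - fibre w"
    using \<rho> fibre by auto
  have "contour_integral (circlepath 0 \<rho>) (\<lambda>\<zeta>. \<phi> \<zeta> / (B \<zeta> - w))
      = 2 * pi * \<i> * (\<Sum>p\<in>fibre w. winding_number (circlepath 0 \<rho>) p * residue (\<lambda>\<zeta>. \<phi> \<zeta> / (B \<zeta> - w)) p)"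
  proof (rule Residue_theorem[OF _ _ finite_fibre[OF w] holo'])
    show "\<forall>z. z \<notin> ball 0 1 \<longrightarrow> winding_number (circlepath 0 \<rho>) z = 0"
      using \<rho> by (auto intro!: winding_number_zero_outside[of _ "cball 0 \<rho>"])
  qed (use path in \<open>auto intro: convex_connected\<close>)
  also have "(\<Sum>p\<in>fibre w. winding_number (circlepath 0 \<rho>) p * residue (\<lambda>\<zeta>. \<phi> \<zeta> / (B \<zeta> - w)) p)
      = fibre_residues \<phi> w"
    unfolding fibre_residues_def by (intro sum.cong refl) (use fibre winding_number_circlepath in auto)
  finally have "contour_integral (circlepath 0 \<rho>) (\<lambda>\<zeta>. \<phi> \<zeta> / (B \<zeta> - w)) = 2 * pi * \<i> * fibre_residues \<phi> w" .
  moreover have "(\<lambda>\<zeta>. \<phi> \<zeta> / (B \<zeta> - w)) contour_integrable_on circlepath 0 \<rho>"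
    by (rule contour_integrable_continuous_circlepath,
        rule continuous_on_subset[OF holomorphic_on_imp_continuous_on[OF holo'] path])
  ultimately show ?thesis using has_contour_integral_integral by metis
qed

text \<open>Cauchy's formula for \<open>f\<close> on a circle enclosing the fibre of \<open>B z\<close>, combined with
  \<open>1 / (u - z) = (\<Sum>j<n. e0 a j z * e0_dual a n j u) / (B u - B z)\<close>.\<close>

lemma e0_expansion:
  assumes holo: "f holomorphic_on ball 0 1" and z: "z \<in> ball 0 1"
  shows "f z = (\<Sum>j<n. e0 a j z * fibre_residues (\<lambda>\<zeta>. f \<zeta> * e0_dual a n j \<zeta>) (B z))"
proof -
  define w where "w = B z"
  have w: "cmod w < 1" using B_in_ball[OF z] by (simp add: w_def)
  have fin: "finite (fibre w)" by (rule finite_fibre[OF w])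
  have z_fibre: "z \<in> fibre w" using z by (simp add: fibre_def w_def)
  define m where "m = Max (norm ` fibre w)"
  have m: "m < 1" unfolding m_def using fin z_fibre by (subst Max_less_iff) (auto simp: fibre_def)
  have le_m: "\<And>p. p \<in> fibre w \<Longrightarrow> cmod p \<le> m" unfolding m_def using fin by auto
  define \<rho> where "\<rho> = (1 + m) / 2"
  have "0 \<le> m" using le_m[OF z_fibre] norm_ge_zero[of z] by linarith
  then have \<rho>: "0 < \<rho>" "\<rho> < 1" "m < \<rho>" using m by (auto simp: \<rho>_def)
  have fibre: "fibre w \<subseteq> ball 0 \<rho>" using le_m \<rho> by fastforce
  have z\<rho>: "cmod z < \<rho>" using le_m[OF z_fibre] \<rho> by simp
  have holo_j: "(\<lambda>\<zeta>. f \<zeta> * e0_dual a n j \<zeta>) holomorphic_on ball 0 1" if "j < n" for j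
    by (intro holomorphic_intros holo e0_dual_holomorphic that) auto
  have "((\<lambda>u. \<Sum>j<n. e0 a j z * (f u * e0_dual a n j u / (B u - w)))
        has_contour_integral (\<Sum>j<n. e0 a j z * (2 * pi * \<i> * fibre_residues (\<lambda>\<zeta>. f \<zeta> * e0_dual a n j \<zeta>) w)))
        (circlepath 0 \<rho>)"
    by (intro has_contour_integral_sum has_contour_integral_lmul
          has_contour_integral_fibre_residues[OF holo_j w \<rho>(1,2) fibre]) auto
  moreover have "(\<Sum>j<n. e0 a j z * (f u * e0_dual a n j u / (B u - w))) = f u / (u - z)"
    if u: "u \<in> path_image (circlepath 0 \<rho>)" for u
  proof -
    have u1: "u \<in> ball 0 1" "cmod u = \<rho>" using u \<rho> by auto
    have factor: "B u - B z = (u - z) * blaschke_kernel a n u z"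
      using B_diff[of z u] z u1 by (simp add: algebra_simps)
    moreover have "B u \<noteq> B z" using u1 fibre by (auto simp: fibre_def w_def)
    ultimately have "blaschke_kernel a n u z \<noteq> 0" by auto
    have "u \<noteq> z" using u1 z\<rho> by auto
    have "(\<Sum>j<n. e0 a j z * (f u * e0_dual a n j u / (B u - w)))
        = f u * blaschke_kernel a n u z / (B u - B z)"
      unfolding blaschke_kernel_def w_def by (simp add: sum_divide_distrib sum_distrib_left algebra_simps)
    also have "\<dots> = f u / (u - z)"
      unfolding factor using \<open>blaschke_kernel a n u z \<noteq> 0\<close> \<open>u \<noteq> z\<close> by simp
    finally show ?thesis .
  qed
  ultimately have "((\<lambda>u. f u / (u - z)) has_contour_integral
      (\<Sum>j<n. e0 a j z * (2 * pi * \<i> * fibre_residues (\<lambda>\<zeta>. f \<zeta> * e0_dual a n j \<zeta>) w))) (circlepath 0 \<rho>)"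
    by (rule has_contour_integral_eq)
  moreover have "((\<lambda>u. f u / (u - z)) has_contour_integral (2 * of_real pi * \<i> * f z)) (circlepath 0 \<rho>)"
  proof (rule Cauchy_integral_circlepath_simple)
    show "f holomorphic_on cball 0 \<rho>" by (rule holomorphic_on_subset[OF holo]) (use \<rho> in auto)
  qed (use z\<rho> in simp)
  ultimately have "2 * of_real pi * \<i> * f z
      = (\<Sum>j<n. e0 a j z * (2 * pi * \<i> * fibre_residues (\<lambda>\<zeta>. f \<zeta> * e0_dual a n j \<zeta>) w))"
    by (rule has_contour_integral_unique[rotated])
  also have "\<dots> = 2 * pi * \<i> * (\<Sum>j<n. e0 a j z * fibre_residues (\<lambda>\<zeta>. f \<zeta> * e0_dual a n j \<zeta>) w)"
    by (simp add: sum_distrib_left algebra_simps)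
  finally show ?thesis by (simp add: w_def)
qed

text \<open>Locally, \<open>fibre_residues \<phi>\<close> is a contour integral over a fixed circle depending
  holomorphically on the parameter.\<close>

lemma fibre_residues_holomorphic:
  assumes holo: "\<phi> holomorphic_on ball 0 1"
  shows "fibre_residues \<phi> holomorphic_on ball 0 1"
proof -
  have "\<exists>d. (fibre_residues \<phi> has_field_derivative d) (at w0)" if w0: "w0 \<in> ball 0 1" for w0
  proof -
    define m where "m = (1 + cmod w0) / 2"
    have m: "m < 1" "cmod w0 < m" using w0 by (auto simp: m_def)
    obtain \<rho> where \<rho>: "0 < \<rho>" "\<rho> < 1"
      and B_large: "\<And>z. \<rho> \<le> cmod z \<Longrightarrow> cmod z \<le> 1 \<Longrightarrow> m < cmod (B z)"
      using norm_B_near_circle[OF m(1)] by blast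
    define U where "U = ball (0::complex) m"
    have fibre: "fibre w \<subseteq> ball 0 \<rho>" if "w \<in> U" for w
    proof
      fix p assume "p \<in> fibre w"
      then have "cmod p < 1" "B p = w" by (auto simp: fibre_def)
      then show "p \<in> ball 0 \<rho>" using B_large[of p] that by (force simp: U_def)
    qed
    define G where "G w = contour_integral (circlepath 0 \<rho>) (\<lambda>\<zeta>. \<phi> \<zeta> / (B \<zeta> - w))" for w
    have G: "fibre_residues \<phi> w = G w / (2 * pi * \<i>)" if "w \<in> U" for w
    proof -
      have "cmod w < 1" using that m by (simp add: U_def)
      from has_contour_integral_fibre_residues[OF holo this \<rho> fibre[OF that]] show ?thesis
        unfolding G_def by (simp add: contour_integral_unique)
    qed
    have "G holomorphic_on U" unfolding G_def
    proof (rule holomorphic_on_circlepath_integral_param)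
      show "continuous_on (sphere 0 \<rho>) \<phi>"
        by (rule continuous_on_subset[OF holomorphic_on_imp_continuous_on[OF holo]]) (use \<rho> in auto)
      show "continuous_on (sphere 0 \<rho>) B"
        by (rule holomorphic_on_imp_continuous_on[OF B_holomorphic]) (use \<rho> in auto)
      show "B \<zeta> \<noteq> w" if "w \<in> U" "\<zeta> \<in> sphere 0 \<rho>" for w \<zeta>
        using that B_large[of \<zeta>] \<rho> by (auto simp: U_def)
    qed (use \<rho> in \<open>auto simp: U_def\<close>)
    then have "(\<lambda>w. G w / (2 * pi * \<i>)) holomorphic_on U" by (intro holomorphic_intros) auto
    then have "((\<lambda>w. G w / (2 * pi * \<i>)) has_field_derivative deriv (\<lambda>w. G w / (2 * pi * \<i>)) w0) (at w0)"
      by (rule holomorphic_derivI) (use m in \<open>auto simp: U_def\<close>)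
    then have "(fibre_residues \<phi> has_field_derivative deriv (\<lambda>w. G w / (2 * pi * \<i>)) w0) (at w0)"
      by (rule has_field_derivative_transform_within_open[of _ _ _ U]) (use m G in \<open>auto simp: U_def\<close>)
    then show ?thesis by blast
  qed
  then show ?thesis by (simp add: holomorphic_on_open)
qed

text \<open>Near the circle each residue is \<open>\<phi> p / B' p\<close> with \<open>\<bar>B' p\<bar> > 1/2\<close>.\<close>

lemma norm_fibre_residues_annulus:
  assumes holo: "\<phi> holomorphic_on ball 0 1" and bound: "\<And>z. z \<in> ball 0 1 \<Longrightarrow> cmod (\<phi> z) \<le> K"
    and w: "annulus_radius < cmod w" "cmod w < 1"
  shows "cmod (fibre_residues \<phi> w) \<le> real n * (2 * K)"
proof -
  have "cmod (fibre_residues \<phi> w) \<le> (\<Sum>p\<in>fibre w. cmod (residue (\<lambda>\<zeta>. \<phi> \<zeta> / (B \<zeta> - w)) p))"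
    unfolding fibre_residues_def by (rule norm_sum)
  also have "\<dots> \<le> (\<Sum>p\<in>fibre w. 2 * K)"
  proof (rule sum_mono)
    fix p assume p: "p \<in> fibre w"
    have kernel: "1/2 < cmod (blaschke_kernel a n p p)" by (rule norm_kernel_diag_fibre[OF w(1) p])
    then have "residue (\<lambda>\<zeta>. \<phi> \<zeta> / (B \<zeta> - w)) p = \<phi> p / blaschke_kernel a n p p"
      by (intro residue_fibre_point[OF holo p]) auto
    also have "cmod \<dots> \<le> cmod (\<phi> p) / (1/2)"
      unfolding norm_divide using kernel by (intro divide_left_mono) auto
    also have "\<dots> \<le> 2 * K" using bound[of p] p by (simp add: fibre_def)
    finally show "cmod (residue (\<lambda>\<zeta>. \<phi> \<zeta> / (B \<zeta> - w)) p) \<le> 2 * K" .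
  qed
  also have "\<dots> = real n * (2 * K)" using card_fibre[OF w] by simp
  finally show ?thesis .
qed

lemma bounded_fibre_residues:
  assumes holo: "\<phi> holomorphic_on ball 0 1" and bound: "\<And>z. z \<in> ball 0 1 \<Longrightarrow> cmod (\<phi> z) \<le> K"
  shows "bounded (fibre_residues \<phi> ` ball 0 1)"
proof -
  have "continuous_on (cball 0 annulus_radius) (fibre_residues \<phi>)"
    by (rule continuous_on_subset[OF holomorphic_on_imp_continuous_on[OF fibre_residues_holomorphic[OF holo]]])
       (use annulus_radius in auto)
  then have "bounded (fibre_residues \<phi> ` cball 0 annulus_radius)"
    by (intro compact_imp_bounded compact_continuous_image) auto
  then obtain K' where K': "\<And>w. w \<in> cball 0 annulus_radius \<Longrightarrow> cmod (fibre_residues \<phi> w) \<le> K'"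
    unfolding bounded_iff by blast
  have "cmod (fibre_residues \<phi> w) \<le> max K' (real n * (2 * K))" if "w \<in> ball 0 1" for w
  proof (cases "cmod w \<le> annulus_radius")
    case True
    then show ?thesis using K'[of w] by simp
  next
    case False
    then show ?thesis using norm_fibre_residues_annulus[OF holo bound, of w] that by simp
  qed
  then show ?thesis unfolding bounded_iff by blast
qed

lemma e0_decomposition_exists:
  assumes f: "f \<in> Hinf"
  shows "\<exists>g. (\<forall>j<n. g j \<in> Hinf_comp B) \<and> (\<forall>z\<in>ball 0 1. f z = (\<Sum>j<n. e0 a j z * g j z))"
proof -
  have holo: "f holomorphic_on ball 0 1" using f by (simp add: Hinf_def)
  have "bounded (f ` ball 0 1)" using f by (simp add: Hinf_def)
  then obtain K where K: "\<And>z. z \<in> ball 0 1 \<Longrightarrow> cmod (f z) \<le> K"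
    unfolding bounded_iff by blast
  have "fibre_residues (\<lambda>\<zeta>. f \<zeta> * e0_dual a n j \<zeta>) \<in> Hinf" if j: "j < n" for j
  proof -
    have "bounded (e0_dual a n j ` cball 0 1)"
      using holomorphic_on_imp_continuous_on[OF e0_dual_holomorphic[OF j order_refl]]
      by (intro compact_imp_bounded compact_continuous_image) auto
    then obtain K' where K': "\<And>z. z \<in> cball 0 1 \<Longrightarrow> cmod (e0_dual a n j z) \<le> K'"
      unfolding bounded_iff by blast
    have "cmod (f z * e0_dual a n j z) \<le> K * K'" if "z \<in> ball 0 1" for z
      unfolding norm_mult using K[OF that] K'[of z] that by (intro mult_mono') auto
    moreover have "(\<lambda>\<zeta>. f \<zeta> * e0_dual a n j \<zeta>) holomorphic_on ball 0 1"
      by (intro holomorphic_intros holo e0_dual_holomorphic j) auto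
    ultimately show ?thesis
      unfolding Hinf_def using fibre_residues_holomorphic bounded_fibre_residues by blast
  qed
  then show ?thesis
    using e0_expansion[OF holo] unfolding Hinf_comp_def
    by (intro exI[of _ "\<lambda>j z. fibre_residues (\<lambda>\<zeta>. f \<zeta> * e0_dual a n j \<zeta>) (B z)"]) auto
qed

section \<open>Uniqueness of the decomposition\<close>

definition e0_poly :: "nat \<Rightarrow> complex poly" where
  "e0_poly j = smult (e0_scale a j)
     ((\<Prod>i\<in>{1..j}. [:- a i, 1:]) * (\<Prod>i\<in>{Suc (Suc j)..n}. [:1, - cnj (a i):]))"

lemma poly_e0_poly:
  assumes z: "cmod z \<le> 1" and j: "j < n"
  shows "poly (e0_poly j) z = poly denom_poly z * e0 a j z"
proof -
  have numer: "poly (\<Prod>i\<in>{1..j}. [:- a i, 1:]) z = (\<Prod>i=1..j. z - a i)"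
    unfolding poly_prod by (intro prod.cong) auto
  have denom_tail: "poly (\<Prod>i\<in>{Suc (Suc j)..n}. [:1, - cnj (a i):]) z
      = (\<Prod>i=Suc (Suc j)..n. 1 - cnj (a i) * z)"
    unfolding poly_prod by (intro prod.cong) (auto simp: algebra_simps)
  have denom: "poly denom_poly z = (\<Prod>i=1..j. 1 - cnj (a i) * z) * (1 - cnj (a (Suc j)) * z)
      * (\<Prod>i=Suc (Suc j)..n. 1 - cnj (a i) * z)"
    unfolding poly_denom_poly by (rule prod_split_at[OF j])
  have partial: "blaschke_partial a j z = (\<Prod>i=1..j. z - a i) / (\<Prod>i=1..j. 1 - cnj (a i) * z)"
    unfolding blaschke_partial_def by (rule prod_dividef)
  have "(\<Prod>i=1..j. 1 - cnj (a i) * z) \<noteq> 0" "1 - cnj (a (Suc j)) * z \<noteq> 0"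
    using zeros_in_disc z j blaschke_denom_nonzero by auto
  then show ?thesis
    unfolding e0_poly_def poly_smult poly_mult numer denom_tail denom e0_altdef partial
    by (simp add: field_simps)
qed

lemma degree_e0_poly:
  assumes j: "j < n"
  shows "degree (e0_poly j) < n"
proof -
  have "degree (\<Prod>i\<in>{1..j}. [:- a i, 1:]) \<le> (\<Sum>i\<in>{1..j}. degree [:- a i, 1:])"
    using degree_prod_sum_le[of "{1..j}" "\<lambda>i. [:- a i, 1:]"] by (simp add: o_def)
  also have "\<dots> = j" by simp
  finally have numer: "degree (\<Prod>i\<in>{1..j}. [:- a i, 1:]) \<le> j" .
  have "degree (\<Prod>i\<in>{Suc (Suc j)..n}. [:1, - cnj (a i):])
      \<le> (\<Sum>i\<in>{Suc (Suc j)..n}. degree [:1, - cnj (a i):])"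
    using degree_prod_sum_le[of "{Suc (Suc j)..n}" "\<lambda>i. [:1, - cnj (a i):]"] by (simp add: o_def)
  also have "\<dots> \<le> (\<Sum>i\<in>{Suc (Suc j)..n}. 1)" by (intro sum_mono) (simp add: degree_pCons_le)
  also have "\<dots> = n - Suc j" by simp
  finally have denom: "degree (\<Prod>i\<in>{Suc (Suc j)..n}. [:1, - cnj (a i):]) \<le> n - Suc j" .
  have "degree (e0_poly j)
      \<le> degree ((\<Prod>i\<in>{1..j}. [:- a i, 1:]) * (\<Prod>i\<in>{Suc (Suc j)..n}. [:1, - cnj (a i):]))"
    unfolding e0_poly_def by (rule degree_smult_le)
  also have "\<dots> \<le> j + (n - Suc j)"
    using degree_mult_le numer denom by (meson add_mono order_trans)
  finally show ?thesis using j by simp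
qed

text \<open>Clearing denominators turns such a combination into a polynomial of degree \<open>< n\<close>,
  which vanishes at the \<open>n\<close> points of the fibre.\<close>

lemma e0_combination_vanishing_on_fibre:
  assumes w: "annulus_radius < cmod w" "cmod w < 1"
    and vanish: "\<forall>p\<in>fibre w. (\<Sum>j<n. c j * e0 a j p) = 0"
  shows "\<forall>j<n. c j = 0"
proof -
  define P where "P = (\<Sum>j<n. smult (c j) (e0_poly j))"
  have poly_P: "poly P z = poly denom_poly z * (\<Sum>j<n. c j * e0 a j z)" if "cmod z \<le> 1" for z
    unfolding P_def poly_sum poly_smult using poly_e0_poly[OF that]
    by (simp add: sum_distrib_left algebra_simps)
  have "P = 0"
  proof (rule ccontr)
    assume "P \<noteq> 0"
    have "degree P \<le> n - 1"
      unfolding P_def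
      by (intro degree_sum_le) (use degree_e0_poly degree_smult_le le_trans in \<open>force+\<close>)
    moreover have "fibre w \<subseteq> {z. poly P z = 0}"
      using poly_P vanish by (auto simp: fibre_def)
    then have "card (fibre w) \<le> degree P"
      using card_mono[OF poly_roots_finite[OF \<open>P \<noteq> 0\<close>]] card_poly_roots_bound[OF \<open>P \<noteq> 0\<close>]
      by (meson le_trans)
    ultimately show False using card_fibre[OF w] n_pos by simp
  qed
  then have "\<forall>z\<in>ball 0 1. (\<Sum>j<n. c j * e0 a j z) = 0"
    using poly_P poly_denom_poly_nonzero by force
  then show ?thesis by (rule e0_linear_independent[OF zeros_in_disc])
qed

lemma e0_decomposition_unique:
  assumes g: "\<forall>j<n. g j \<in> Hinf_comp B" and sum: "\<forall>z\<in>ball 0 1. (\<Sum>j<n. e0 a j z * g j z) = 0"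
  shows "\<forall>j<n. \<forall>z\<in>ball 0 1. g j z = 0"
proof -
  have "\<forall>j\<in>{..<n}. \<exists>F. F \<in> Hinf \<and> (\<forall>z\<in>ball 0 1. g j z = F (B z))"
    using g by (auto simp: Hinf_comp_def)
  from bchoice[OF this] obtain F
    where F: "\<And>j. j < n \<Longrightarrow> F j \<in> Hinf \<and> (\<forall>z\<in>ball 0 1. g j z = F j (B z))"
    by auto
  define A where "A = ball (0::complex) 1 - cball 0 annulus_radius"
  have F_annulus: "F j w = 0" if j: "j < n" and w: "w \<in> A" for j w
  proof -
    have w1: "annulus_radius < cmod w" "cmod w < 1" using w by (auto simp: A_def)
    have "\<forall>p\<in>fibre w. (\<Sum>j<n. F j w * e0 a j p) = 0"
    proof
      fix p assume "p \<in> fibre w"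
      then have p: "p \<in> ball 0 1" "B p = w" by (auto simp: fibre_def)
      then have "(\<Sum>j<n. e0 a j p * g j p) = 0" using sum by simp
      moreover have "g j p = F j w" if "j < n" for j using F[OF that] p by auto
      ultimately show "(\<Sum>j<n. F j w * e0 a j p) = 0" by (simp add: mult.commute)
    qed
    then have "\<forall>j<n. F j w = 0" by (rule e0_combination_vanishing_on_fibre[OF w1])
    then show ?thesis using j by blast
  qed
  have "A \<noteq> {}"
  proof -
    have "cmod (complex_of_real ((1 + annulus_radius) / 2)) = (1 + annulus_radius) / 2"
      unfolding norm_of_real using annulus_radius(1) by simp
    then have "complex_of_real ((1 + annulus_radius) / 2) \<in> A"
      using annulus_radius(2) by (simp add: A_def)
    then show ?thesis by blast
  qed
  moreover have "open A" by (simp add: A_def open_Diff)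
  moreover have "A \<subseteq> ball 0 1" by (auto simp: A_def)
  ultimately have "F j w = 0" if "j < n" "w \<in> ball 0 1" for j w
    using analytic_continuation_open[of A "ball 0 1" "F j" "\<lambda>_. 0" w] F[OF that(1)] F_annulus that
    by (simp add: Hinf_def)
  then show ?thesis using F B_in_ball by simp
qed

end

theorem mainTheorem11:
  fixes a :: "nat \<Rightarrow> complex" and n :: nat
  assumes "n \<ge> 1"
    and "\<forall>i\<in>{1..n}. cmod (a i) < 1"
    and "a 1 = 0"
  shows "(\<forall>f\<in>Hinf. \<exists>g. (\<forall>j<n. g j \<in> Hinf_comp (blaschke_partial a n)) \<and>
            (\<forall>z\<in>ball 0 1. f z = (\<Sum>j<n. e0 a j z * g j z)))
       \<and> (\<forall>g. (\<forall>j<n. g j \<in> Hinf_comp (blaschke_partial a n)) \<and>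
              (\<forall>z\<in>ball 0 1. (\<Sum>j<n. e0 a j z * g j z) = 0)
              \<longrightarrow> (\<forall>j<n. \<forall>z\<in>ball 0 1. g j z = 0))"
proof -
  interpret finite_blaschke_product a n
    by unfold_locales (use assms in auto)
  show ?thesis using e0_decomposition_exists e0_decomposition_unique by blast
qed

end
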